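(* Let $n\ge1$ and let $\mathfrak{c}=\{c_{ij}\}_{1\le i<j\le n}$, $\mathfrak{\ell}=\{\ell_1,\dots,\ell_n\}$ be integers. For every $\sigma\in\{+,-\}^n$, the Cartier datum $m_\sigma\in\mathbb{Z}^n$ of the divisor $D(\mathfrak{c},\mathfrak{\ell})$ lies in the closure $\overline{C(\mathfrak{c},\mathfrak{\ell})}$ of $C(\mathfrak{c},\mathfrak{\ell})$ in the Euclidean topology of $\mathbb{R}^n$.
   Context: $A_n(x)=\ell_n$, $A_j(x)=\ell_j-\sum_{k=j+1}^nc_{jk}x_k$ for $1\le j\le n-1$. $C(\mathfrak{c},\mathfrak{\ell})=\{x\in\mathbb{R}^n:$ for each $1\le k\le n$, $A_k(x)<x_k<0$ or $0\le x_k\le A_k(x)\}$. Toric data: $e_j^+$ standard basis of $\mathbb{R}^n$, $e_j^-:=-e_j^+-\sum_{k>j}c_{jk}e_k^+$; $\Sigma_{\mathfrak{c}}$ the fan of cones generated by subsets of $\{e_1^\pm,\dots,e_n^\pm\}$ not containing any $\{e_j^+,e_j^-\}$, with maximal cones $\mathrm{Cone}\{e_1^{\sigma_1},\dots,e_n^{\sigma_n}\}$ indexed by $\sigma\in\{+,-\}^n$; $D(\mathfrak{c},\mathfrak{\ell})=\sum_j\ell_jD_{e_j^-}$ on the toric variety $X(\mathfrak{c})$. The Cartier datum $m_\sigma\in\mathbb{Z}^n$ is the unique vector with $\langle m_\sigma,e_j^{+}\rangle=0$ if $\sigma_j=+$ and $\langle m_\sigma,e_j^-\rangle=-\ell_j$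 if $\sigma_j=-$ (standard inner product); explicitly $m_{\sigma,j}=0$ if $\sigma_j=+$ and $m_{\sigma,j}=A_j(m_{\sigma,j+1},\dots,m_{\sigma,n})$ if $\sigma_j=-$. *)

theory Defs
  imports "HOL-Analysis.Analysis"
begin

text \<open>R^n is modelled as (real, 'n) vec for a finite linearly ordered index type 'n
  (the order plays the role of 1 < 2 < ... < n).  The coefficients c_jk are only
  used for j < k.  A sign vector sigma in {+,-}^n is a function 'n => bool
  (True = +, False = -).\<close>

definition A_fun :: "('n::{finite,linorder} \<Rightarrow> 'n \<Rightarrow> int) \<Rightarrow> ('n \<Rightarrow> int) \<Rightarrow> 'n \<Rightarrow> (real, 'n) vec \<Rightarrow> real" where
  "A_fun c l j x = of_int (l j) - (\<Sum>k\<in>{k. j < k}. of_int (c j k) * x $ k)"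

definition C_set :: "('n::{finite,linorder} \<Rightarrow> 'n \<Rightarrow> int) \<Rightarrow> ('n \<Rightarrow> int) \<Rightarrow> ((real, 'n) vec) set" where
  "C_set c l = {x. \<forall>k. (A_fun c l k x < x $ k \<and> x $ k < 0) \<or> (0 \<le> x $ k \<and> x $ k \<le> A_fun c l k x)}"

definition e_plus :: "'n::{finite,linorder} \<Rightarrow> (real, 'n) vec" where
  "e_plus j = (\<chi> k. if k = j then 1 else 0)"

definition e_minus :: "('n::{finite,linorder} \<Rightarrow> 'n \<Rightarrow> int) \<Rightarrow> 'n \<Rightarrow> (real, 'n) vec" where
  "e_minus c j = - e_plus j - (\<Sum>k\<in>{k. j < k}. of_int (c j k) *\<^sub>R e_plus k)"

definition int_vec :: "('n::{finite,linorder} \<Rightarrow> int) \<Rightarrow> (real, 'n) vec" where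
  "int_vec m = (\<chi> k. of_int (m k))"

definition cartier_datum :: "('n::{finite,linorder} \<Rightarrow> 'n \<Rightarrow> int) \<Rightarrow> ('n \<Rightarrow> int) \<Rightarrow> ('n \<Rightarrow> bool) \<Rightarrow> ('n \<Rightarrow> int)" where
  "cartier_datum c l \<sigma> = (THE m. \<forall>j. (\<sigma> j \<longrightarrow> int_vec m \<bullet> e_plus j = 0)
        \<and> (\<not> \<sigma> j \<longrightarrow> int_vec m \<bullet> e_minus c j = - of_int (l j)))"

end

theory Submission
  imports Defs
begin

text \<open>Everything is built coordinate by coordinate from the largest index downwards, since
  A_k depends only on the coordinates of larger index.  For m_sigma this is back-substitution.
  For the approximation: once y is close to m_sigma above k, A_k(y) is close to A_k(m_sigma),
  and y_k can be chosen close to m_sigma,k (which is 0 or A_k(m_sigma)) while satisfying the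
  k-th condition of C: take 0 or A_k(y) itself if A_k(y) \<ge> 0, and a point of the open
  interval (A_k(y), 0) otherwise.\<close>

definition upward_closed :: "'a::order set \<Rightarrow> bool" where
  "upward_closed U \<longleftrightarrow> (\<forall>i j. i \<in> U \<longrightarrow> i \<le> j \<longrightarrow> j \<in> U)"

lemma upward_closed_Diff_Min:
  fixes U :: "'a::{finite,linorder} set"
  assumes "upward_closed U"
  shows "upward_closed (U - {Min U})"
  unfolding upward_closed_def
proof (intro allI impI)
  fix i j assume "i \<in> U - {Min U}" and "i \<le> j"
  then have "i \<in> U" "Min U \<noteq> i" by auto
  then have "Min U < i" using Min_le[OF finite] by (blast intro: order_le_neq_trans)
  then have "Min U < j" using \<open>i \<le> j\<close> by (rule less_le_trans)
  moreover have "j \<in> U" using assms \<open>i \<in> U\<close> \<open>i \<le> j\<close> unfolding upward_closed_def by blast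
  ultimately show "j \<in> U - {Min U}" by auto
qed

lemma upward_closed_greater_Min:
  fixes U :: "'a::{finite,linorder} set"
  assumes "upward_closed U" "U \<noteq> {}" "Min U < i"
  shows "i \<in> U - {Min U}"
proof -
  have "Min U \<in> U" using Min_in[OF finite assms(2)] .
  then have "i \<in> U" using assms(1,3) unfolding upward_closed_def by (blast intro: less_imp_le)
  then show ?thesis using assms(3) by auto
qed

lemma upward_closed_induct [consumes 1, case_names empty remove_Min]:
  fixes U :: "'a::{finite,linorder} set"
  assumes "upward_closed U"
    and "P {}"
    and "\<And>U. upward_closed U \<Longrightarrow> U \<noteq> {} \<Longrightarrow> P (U - {Min U}) \<Longrightarrow> P U"
  shows "P U"
  using assms(1)
proof (induction "card U" arbitrary: U)
  case 0
  then show ?case using assms(2) by simp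
next
  case (Suc n)
  then have "U \<noteq> {}" by auto
  then have "card (U - {Min U}) = n" using Suc.hyps(2) by simp
  then have "P (U - {Min U})" using Suc.hyps(1) upward_closed_Diff_Min[OF Suc.prems] by simp
  then show ?case by (rule assms(3)[OF Suc.prems \<open>U \<noteq> {}\<close>])
qed

lemma A_fun_cong:
  assumes "\<forall>i>k. y $ i = z $ i"
  shows "A_fun c l k y = A_fun c l k z"
  unfolding A_fun_def using assms by (intro arg_cong2[where f="(-)"] refl sum.cong) auto

lemma abs_A_fun_diff_le:
  assumes "\<forall>i>k. \<bar>y $ i - z $ i\<bar> \<le> d"
  shows "\<bar>A_fun c l k y - A_fun c l k z\<bar> \<le> (\<Sum>i\<in>{i. k < i}. \<bar>of_int (c k i)\<bar>) * d"
proof -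
  have "A_fun c l k y - A_fun c l k z = (\<Sum>i\<in>{i. k < i}. of_int (c k i) * (z $ i - y $ i))"
    unfolding A_fun_def by (simp add: sum_subtractf[symmetric] algebra_simps)
  also have "\<bar>\<dots>\<bar> \<le> (\<Sum>i\<in>{i. k < i}. \<bar>of_int (c k i)\<bar> * \<bar>z $ i - y $ i\<bar>)"
    unfolding abs_mult[symmetric] by (rule sum_abs)
  also have "\<dots> \<le> (\<Sum>i\<in>{i. k < i}. \<bar>of_int (c k i)\<bar> * d)"
    using assms by (intro sum_mono mult_left_mono) (auto simp: abs_minus_commute)
  finally show ?thesis by (simp add: sum_distrib_right)
qed

definition cartier_cond :: "('n::{finite,linorder} \<Rightarrow> 'n \<Rightarrow> int) \<Rightarrow> ('n \<Rightarrow> int) \<Rightarrow> ('n \<Rightarrow> bool) \<Rightarrow> 'n \<Rightarrow> ('n \<Rightarrow> int) \<Rightarrow> bool" where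
  "cartier_cond c l \<sigma> j m \<longleftrightarrow> of_int (m j) = (if \<sigma> j then 0 else A_fun c l j (int_vec m))"

lemma inner_int_vec_e_plus: "int_vec m \<bullet> e_plus j = of_int (m j)"
  by (simp add: inner_vec_def int_vec_def e_plus_def if_distrib cong: if_cong)

lemma A_fun_int_vec:
  "A_fun c l j (int_vec m) = of_int (l j - (\<Sum>k\<in>{k. j < k}. c j k * m k))"
  by (simp add: A_fun_def int_vec_def)

lemma inner_int_vec_e_minus:
  "int_vec m \<bullet> e_minus c j = - of_int (l j) \<longleftrightarrow> of_int (m j) = A_fun c l j (int_vec m)"
  by (simp add: e_minus_def inner_diff_right inner_sum_right inner_int_vec_e_plus
      A_fun_int_vec algebra_simps) linarith

lemma cartier_cond_iff:
  "((\<sigma> j \<longrightarrow> int_vec m \<bullet> e_plus j = 0) \<and> (\<not> \<sigma> j \<longrightarrow> int_vec m \<bullet> e_minus c j = - of_int (l j)))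
    \<longleftrightarrow> cartier_cond c l \<sigma> j m"
  unfolding cartier_cond_def inner_int_vec_e_minus by (simp add: inner_int_vec_e_plus)

lemma cartier_cond_solvable:
  fixes c :: "'n::{finite,linorder} \<Rightarrow> 'n \<Rightarrow> int"
  assumes "upward_closed U"
  shows "\<exists>m. \<forall>j\<in>U. cartier_cond c l \<sigma> j m"
  using assms
proof (induction U rule: upward_closed_induct)
  case empty
  then show ?case by simp
next
  case (remove_Min U)
  define k where "k = Min U"
  obtain m where m: "\<forall>j\<in>U - {k}. cartier_cond c l \<sigma> j m"
    using remove_Min.IH k_def by blast
  define m' where "m' = m(k := if \<sigma> k then 0 else l k - (\<Sum>i\<in>{i. k < i}. c k i * m i))"
  have A_eq: "A_fun c l j (int_vec m') = A_fun c l j (int_vec m)" if "k \<le> j" for j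
    using that by (intro A_fun_cong) (auto simp: m'_def int_vec_def)
  have "cartier_cond c l \<sigma> j m'" if "j \<in> U" for j
  proof (cases "j = k")
    case True
    have "m' k = (if \<sigma> k then 0 else l k - (\<Sum>i\<in>{i. k < i}. c k i * m i))"
      by (simp add: m'_def)
    with True show ?thesis
      using A_eq[of k, unfolded A_fun_int_vec[of c l k m]] by (simp add: cartier_cond_def)
  next
    case False
    moreover have "k \<le> j" using that by (simp add: k_def)
    ultimately show ?thesis
      using m that A_eq[of j] by (simp add: cartier_cond_def m'_def)
  qed
  then show ?case by blast
qed

lemma cartier_cond_unique:
  fixes c :: "'n::{finite,linorder} \<Rightarrow> 'n \<Rightarrow> int"
  assumes "\<forall>j. cartier_cond c l \<sigma> j m1" "\<forall>j. cartier_cond c l \<sigma> j m2"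
  shows "m1 = m2"
proof (rule ccontr)
  assume "m1 \<noteq> m2"
  define k where "k = Max {i. m1 i \<noteq> m2 i}"
  have "m1 k \<noteq> m2 k" using \<open>m1 \<noteq> m2\<close> Max_in[of "{i. m1 i \<noteq> m2 i}"] by (auto simp: k_def)
  have "m1 i = m2 i" if "k < i" for i
  proof (rule ccontr)
    assume "m1 i \<noteq> m2 i"
    then have "i \<le> k" unfolding k_def by (intro Max_ge) simp_all
    with that show False by simp
  qed
  then have "A_fun c l k (int_vec m1) = A_fun c l k (int_vec m2)"
    by (intro A_fun_cong) (simp add: int_vec_def)
  then have "real_of_int (m1 k) = real_of_int (m2 k)"
    using assms[rule_format, of k] by (cases "\<sigma> k") (auto simp: cartier_cond_def)
  then have "m1 k = m2 k" by simp
  with \<open>m1 k \<noteq> m2 k\<close> show False ..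
qed

lemma cartier_datum_eqI:
  fixes c :: "'n::{finite,linorder} \<Rightarrow> 'n \<Rightarrow> int"
  assumes "\<forall>j. cartier_cond c l \<sigma> j m"
  shows "cartier_datum c l \<sigma> = m"
  unfolding cartier_datum_def cartier_cond_iff
  using assms cartier_cond_unique by (intro the_equality) blast+

definition C_cond :: "real \<Rightarrow> real \<Rightarrow> bool" where
  "C_cond a x \<longleftrightarrow> (a < x \<and> x < 0) \<or> (0 \<le> x \<and> x \<le> a)"

lemma C_set_iff: "y \<in> C_set c l \<longleftrightarrow> (\<forall>k. C_cond (A_fun c l k y) (y $ k))"
  by (simp add: C_set_def C_cond_def)

lemma C_cond_near_target:
  assumes "\<bar>a - a0\<bar> < e"
  shows "\<exists>x. C_cond a x \<and> \<bar>x - (if s then 0 else a0)\<bar> < e"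
proof (cases "a \<ge> 0")
  case True
  then show ?thesis using assms by (intro exI[of _ "if s then 0 else a"]) (auto simp: C_cond_def)
next
  case False
  have "e > 0" using assms by linarith
  show ?thesis
  proof (cases s)
    case True
    have "max a (- e) < 0" using \<open>\<not> a \<ge> 0\<close> \<open>e > 0\<close> by simp
    then obtain x where "max a (- e) < x" "x < 0" using dense by blast
    then show ?thesis using True by (intro exI[of _ x]) (auto simp: C_cond_def)
  next
    case False
    have "a < min 0 (a0 + e)" using \<open>\<not> a \<ge> 0\<close> assms by (simp add: abs_diff_less_iff)
    then obtain x where "a < x" "x < min 0 (a0 + e)" using dense by blast
    then show ?thesis using False assms by (intro exI[of _ x]) (auto simp: C_cond_def)
  qed
qed

lemma cartier_datum_approximable:
  fixes c :: "'n::{finite,linorder} \<Rightarrow> 'n \<Rightarrow> int"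
  assumes m: "\<forall>j. cartier_cond c l \<sigma> j m" and "upward_closed U"
  shows "\<forall>e>0. \<exists>y. \<forall>j\<in>U. C_cond (A_fun c l j y) (y $ j) \<and> \<bar>y $ j - of_int (m j)\<bar> < e"
  using assms(2)
proof (induction U rule: upward_closed_induct)
  case empty
  then show ?case by simp
next
  case (remove_Min U)
  show ?case
  proof (intro allI impI)
    fix e :: real assume "e > 0"
    define k where "k = Min U"
    define K where "K = (\<Sum>i\<in>{i. k < i}. \<bar>of_int (c k i)\<bar> :: real)"
    have "K \<ge> 0" unfolding K_def by (rule sum_nonneg) simp
    define e' where "e' = e / (K + 1)"
    have "e' > 0" "e' \<le> e" "K * e' < e"
      using \<open>e > 0\<close> \<open>K \<ge> 0\<close> by (simp_all add: e'_def field_simps)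
    then obtain y where y: "\<forall>j\<in>U - {k}. C_cond (A_fun c l j y) (y $ j) \<and> \<bar>y $ j - of_int (m j)\<bar> < e'"
      using remove_Min.IH k_def by blast
    have "\<bar>y $ i - int_vec m $ i\<bar> \<le> e'" if "k < i" for i
    proof -
      have "i \<in> U - {k}" using upward_closed_greater_Min[OF remove_Min.hyps] that by (simp add: k_def)
      then show ?thesis using bspec[OF y] by (simp add: int_vec_def less_imp_le)
    qed
    then have "\<bar>A_fun c l k y - A_fun c l k (int_vec m)\<bar> \<le> K * e'"
      unfolding K_def by (intro abs_A_fun_diff_le) simp
    then have "\<bar>A_fun c l k y - A_fun c l k (int_vec m)\<bar> < e"
      using \<open>K * e' < e\<close> by linarith
    then obtain x where x: "C_cond (A_fun c l k y) x"
        "\<bar>x - (if \<sigma> k then 0 else A_fun c l k (int_vec m))\<bar> < e"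
      using C_cond_near_target[where s="\<sigma> k"] by blast
    define z where "z = (\<chi> i. if i = k then x else y $ i)"
    have A_eq: "A_fun c l j z = A_fun c l j y" if "k \<le> j" for j
      using that by (intro A_fun_cong) (auto simp: z_def)
    have "C_cond (A_fun c l j z) (z $ j) \<and> \<bar>z $ j - of_int (m j)\<bar> < e" if "j \<in> U" for j
    proof (cases "j = k")
      case True
      then show ?thesis using x A_eq[of k] m by (simp add: z_def cartier_cond_def)
    next
      case False
      with that have "C_cond (A_fun c l j y) (y $ j) \<and> \<bar>y $ j - of_int (m j)\<bar> < e'"
        using y by blast
      moreover have "k \<le> j" using that by (simp add: k_def)
      ultimately show ?thesis using A_eq[of j] False \<open>e' \<le> e\<close> by (simp add: z_def)
    qed
    then show "\<exists>y. \<forall>j\<in>U. C_cond (A_fun c l j y) (y $ j) \<and> \<bar>y $ j - of_int (m j)\<bar> < e" by blast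
  qed
qed

lemma closure_approachable_cart:
  fixes x :: "real ^ 'n"
  assumes "\<forall>e>0. \<exists>y\<in>S. \<forall>i. \<bar>y $ i - x $ i\<bar> < e"
  shows "x \<in> closure S"
proof -
  have "\<exists>y\<in>S. dist y x < e" if "e > 0" for e
  proof -
    define e' where "e' = e / (real CARD('n) + 1)"
    have "e' > 0" "real CARD('n) * e' < e" using \<open>e > 0\<close> by (simp_all add: e'_def field_simps)
    then obtain y where "y \<in> S" and y: "\<forall>i. \<bar>y $ i - x $ i\<bar> < e'" using assms by blast
    have "dist y x \<le> (\<Sum>i\<in>UNIV. \<bar>(y - x) $ i\<bar>)"
      using norm_le_l1_cart[of "y - x"] by (simp add: dist_norm)
    also have "\<dots> \<le> (\<Sum>i\<in>(UNIV::'n set). e')" using y by (intro sum_mono) (simp add: less_imp_le)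
    also have "\<dots> < e" using \<open>real CARD('n) * e' < e\<close> by simp
    finally show ?thesis using \<open>y \<in> S\<close> by blast
  qed
  then show ?thesis by (simp add: closure_approachable)
qed

theorem lemma2p3:
  fixes c :: "'n::{finite,linorder} \<Rightarrow> 'n \<Rightarrow> int"
    and l :: "'n \<Rightarrow> int"
    and \<sigma> :: "'n \<Rightarrow> bool"
  shows "int_vec (cartier_datum c l \<sigma>) \<in> closure (C_set c l)"
proof -
  have "upward_closed (UNIV :: 'n set)" by (simp add: upward_closed_def)
  then obtain m where m: "\<forall>j. cartier_cond c l \<sigma> j m"
    using cartier_cond_solvable by blast
  have "\<exists>y\<in>C_set c l. \<forall>i. \<bar>y $ i - int_vec m $ i\<bar> < e" if "e > 0" for e
  proof -
    obtain y where y: "\<forall>j. C_cond (A_fun c l j y) (y $ j) \<and> \<bar>y $ j - of_int (m j)\<bar> < e"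
      using cartier_datum_approximable[OF m \<open>upward_closed UNIV\<close>] \<open>e > 0\<close> by blast
    then show ?thesis by (intro bexI[of _ y]) (simp_all add: C_set_iff int_vec_def)
  qed
  then show ?thesis unfolding cartier_datum_eqI[OF m] by (intro closure_approachable_cart) blast
qed

end
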